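(* Let $(P,\leqslant)$ be a conditionally-complete poset and let $P^* := \{x \in P : \exists\, y \in P,\ y \ll x\}$. Then for every directed subset $D$ of $P$ that is bounded above in $P$ and such that $D \cap P^*$ is nonempty, the set $D \cap P^*$ is directed and $\bigvee D = \bigvee (D \cap P^* )$ (suprema taken in $P$).
   Context: A poset is conditionally-complete if every nonempty subset bounded above has a supremum. A nonempty subset $D$ is directed if any two elements of $D$ have an upper bound in $D$. For $x,y \in P$, $x$ is way-below $y$, written $x \ll y$, if for every directed subset $D$ of $P$ bounded above with supremum $d_0$, $y \leqslant d_0$ implies $x \leqslant d$ for some $d \in D$. *)

theory Defs
  imports Main
begin

definition is_sup :: "'a::order set \<Rightarrow> 'a \<Rightarrow> bool" where
  "is_sup S s \<longleftrightarrow> (\<forall>x\<in>S. x \<le> s) \<and> (\<forall>u. (\<forall>x\<in>S. x \<le> u) \<longrightarrow> s \<le> u)"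

definition sup_of :: "'a::order set \<Rightarrow> 'a" where
  "sup_of S = (THE s. is_sup S s)"

definition cond_complete_poset :: "'a::order itself \<Rightarrow> bool" where
  "cond_complete_poset _ \<longleftrightarrow>
     (\<forall>S::'a set. S \<noteq> {} \<and> bdd_above S \<longrightarrow> (\<exists>s. is_sup S s))"

definition directed :: "'a::order set \<Rightarrow> bool" where
  "directed D \<longleftrightarrow> D \<noteq> {} \<and> (\<forall>x\<in>D. \<forall>y\<in>D. \<exists>z\<in>D. x \<le> z \<and> y \<le> z)"

definition way_below :: "'a::order \<Rightarrow> 'a \<Rightarrow> bool" (infix "\<lless>" 50) where
  "x \<lless> y \<longleftrightarrow> (\<forall>D d0. directed D \<and> bdd_above D \<and> is_sup D d0 \<and> y \<le> d0
                        \<longrightarrow> (\<exists>d\<in>D. x \<le> d))"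

definition Pstar :: "'a::order set" where
  "Pstar = {x. \<exists>y. y \<lless> x}"

end

theory Submission
  imports Defs
begin

text \<open>Since \<open>\<lless>\<close> is monotone in its right argument, \<open>Pstar\<close> is an upper set. Hence every
  element of a directed set \<open>D\<close> meeting \<open>Pstar\<close> lies below an element of \<open>D \<inter> Pstar\<close>:
  this subset is cofinal in \<open>D\<close>, so it is directed and has the same upper bounds as \<open>D\<close>,
  and therefore the same supremum.\<close>

lemma way_below_mono_right:
  assumes "x \<lless> y" and "y \<le> z"
  shows "x \<lless> z"
  using assms order_trans unfolding way_below_def by blast

lemma Pstar_upward_closed:
  assumes "x \<in> Pstar" and "x \<le> z"
  shows "z \<in> Pstar"
  using assms way_below_mono_right unfolding Pstar_def by blast

lemma directed_Int_upper_set_cofinal: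
  assumes "directed D" and "\<And>x z. x \<in> U \<Longrightarrow> x \<le> z \<Longrightarrow> z \<in> U" and "D \<inter> U \<noteq> {}"
    and "x \<in> D"
  shows "\<exists>z\<in>D \<inter> U. x \<le> z"
proof -
  obtain p where "p \<in> D" "p \<in> U" using assms(3) by blast
  moreover obtain z where "z \<in> D" "x \<le> z" "p \<le> z"
    using assms(1) \<open>x \<in> D\<close> \<open>p \<in> D\<close> unfolding directed_def by blast
  ultimately show ?thesis using assms(2) by blast
qed

lemma directed_Int_upper_set:
  assumes "directed D" and "\<And>x z. x \<in> U \<Longrightarrow> x \<le> z \<Longrightarrow> z \<in> U" and "D \<inter> U \<noteq> {}"
  shows "directed (D \<inter> U)"
  using assms unfolding directed_def by (metis IntE IntI)

lemma is_sup_cofinal_subset: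
  assumes "E \<subseteq> D" and "\<And>x. x \<in> D \<Longrightarrow> \<exists>y\<in>E. x \<le> y"
  shows "is_sup E = is_sup D"
proof -
  have "(\<forall>x\<in>E. x \<le> u) \<longleftrightarrow> (\<forall>x\<in>D. x \<le> u)" for u
    using assms order_trans by blast
  then show ?thesis unfolding is_sup_def by (intro ext) blast
qed

lemma sup_of_cofinal_subset:
  assumes "E \<subseteq> D" and "\<And>x. x \<in> D \<Longrightarrow> \<exists>y\<in>E. x \<le> y"
  shows "sup_of E = sup_of D"
  unfolding sup_of_def using is_sup_cofinal_subset[OF assms] by simp

theorem lemma2p1:
  fixes D :: "'a::order set"
  assumes "cond_complete_poset TYPE('a)"
    and "directed D" and "bdd_above D" and "D \<inter> Pstar \<noteq> {}"
  shows "directed (D \<inter> Pstar) \<and> sup_of D = sup_of (D \<inter> Pstar)"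
proof
  show "directed (D \<inter> Pstar)"
    using directed_Int_upper_set[OF assms(2) Pstar_upward_closed assms(4)] .
  have "\<exists>z\<in>D \<inter> Pstar. x \<le> z" if "x \<in> D" for x
    using directed_Int_upper_set_cofinal[OF assms(2) Pstar_upward_closed assms(4) that] .
  then show "sup_of D = sup_of (D \<inter> Pstar)"
    using sup_of_cofinal_subset[of "D \<inter> Pstar" D] by auto
qed

end
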